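(* Let $\mathbb{K}$ be a field of characteristic $0$, $\alpha\in\mathbb{K}$, $A=A(\alpha,0,1)$ and $\omega=du-\alpha ud-1\in A$. For $p\in\langle\omega\rangle$ let $[p]$ denote its class in the $A$-bimodule $\langle\omega\rangle/\langle\omega\rangle^2$. Then $\{[u^i\omega d^l]: i,l\ge0\}$ is a $\mathbb{K}$-linear basis of $\langle\omega\rangle/\langle\omega\rangle^2$. Moreover, if $\alpha\neq1$, then for all $i,l\ge0$ $$[u^i\omega d^lu]=\frac{\alpha^l-1}{\alpha-1}[u^i\omega d^{l-1}],\qquad [du^i\omega d^l]=\frac{\alpha^i-1}{\alpha-1}[u^{i-1}\omega d^l],$$ where the right-hand sides are interpreted as $0$ when $l=0$ (first formula) or $i=0$ (second formula).
   Context: For $(\alpha,\beta,\gamma)\in\mathbb{K}^3$, the down-up algebra $A(\alpha,\beta,\gamma)$ is the quotient of $\mathbb{K}\langle d,u\rangle$ by the two-sided ideal generated by $d^2u-(\alpha dud+\beta ud^2+\gamma d)$ and $du^2-(\alpha udu+\beta u^2d+\gamma u)$. $\langle\omega\rangle$ is the two-sided ideal generated by $\omega$. *)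

theory Defs
  imports Main
begin

text \<open>The free algebra K<d,u> is modelled as finitely supported functions from
words over the alphabet {d,u} to K; a word is a bool list with True = d and
False = u.\<close>

type_synonym 'k fa = "bool list \<Rightarrow> 'k"

definition fa_carrier :: "('k::zero) fa set" where
  "fa_carrier = {f. finite {w. f w \<noteq> 0}}"

definition fa_add :: "('k::plus) fa \<Rightarrow> 'k fa \<Rightarrow> 'k fa" where
  "fa_add f g = (\<lambda>w. f w + g w)"

definition fa_sub :: "('k::minus) fa \<Rightarrow> 'k fa \<Rightarrow> 'k fa" where
  "fa_sub f g = (\<lambda>w. f w - g w)"

definition fa_smult :: "'k::times \<Rightarrow> 'k fa \<Rightarrow> 'k fa" where
  "fa_smult c f = (\<lambda>w. c * f w)"

definition fa_zero :: "('k::zero) fa" where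
  "fa_zero = (\<lambda>w. 0)"

definition fa_mono :: "bool list \<Rightarrow> ('k::{zero,one}) fa" where
  "fa_mono v = (\<lambda>w. if w = v then 1 else 0)"

definition fa_one :: "('k::{zero,one}) fa" where
  "fa_one = fa_mono []"

definition fa_mult :: "('k::comm_semiring_1) fa \<Rightarrow> 'k fa \<Rightarrow> 'k fa" where
  "fa_mult f g = (\<lambda>w. \<Sum>i\<le>length w. f (take i w) * g (drop i w))"

primrec fa_pow :: "('k::comm_semiring_1) fa \<Rightarrow> nat \<Rightarrow> 'k fa" where
  "fa_pow f 0 = fa_one"
| "fa_pow f (Suc n) = fa_mult f (fa_pow f n)"

definition fa_sum :: "'i set \<Rightarrow> ('i \<Rightarrow> ('k::comm_monoid_add) fa) \<Rightarrow> 'k fa" where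
  "fa_sum S F = (\<lambda>w. \<Sum>x\<in>S. F x w)"

definition gen_d :: "('k::{zero,one}) fa" where "gen_d = fa_mono [True]"
definition gen_u :: "('k::{zero,one}) fa" where "gen_u = fa_mono [False]"

inductive_set two_sided_ideal :: "('k::comm_ring_1) fa set \<Rightarrow> 'k fa set"
  for S :: "'k fa set" where
  gen: "s \<in> S \<Longrightarrow> s \<in> fa_carrier \<Longrightarrow> s \<in> two_sided_ideal S"
| zero: "fa_zero \<in> two_sided_ideal S"
| add: "a \<in> two_sided_ideal S \<Longrightarrow> b \<in> two_sided_ideal S \<Longrightarrow> fa_add a b \<in> two_sided_ideal S"
| mult: "a \<in> two_sided_ideal S \<Longrightarrow> x \<in> fa_carrier \<Longrightarrow> y \<in> fa_carrier \<Longrightarrow>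
          fa_mult x (fa_mult a y) \<in> two_sided_ideal S"

definition downup_rels :: "'k::comm_ring_1 \<Rightarrow> 'k \<Rightarrow> 'k \<Rightarrow> 'k fa set" where
  "downup_rels \<alpha> \<beta> \<gamma> =
    { fa_sub (fa_mult gen_d (fa_mult gen_d gen_u))
        (fa_add (fa_smult \<alpha> (fa_mult gen_d (fa_mult gen_u gen_d)))
          (fa_add (fa_smult \<beta> (fa_mult gen_u (fa_mult gen_d gen_d))) (fa_smult \<gamma> gen_d))),
      fa_sub (fa_mult gen_d (fa_mult gen_u gen_u))
        (fa_add (fa_smult \<alpha> (fa_mult gen_u (fa_mult gen_d gen_u)))
          (fa_add (fa_smult \<beta> (fa_mult gen_u (fa_mult gen_u gen_d))) (fa_smult \<gamma> gen_u))) }"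

definition dua_omega :: "'k::comm_ring_1 \<Rightarrow> 'k fa" where
  "dua_omega \<alpha> = fa_sub (fa_sub (fa_mult gen_d gen_u) (fa_smult \<alpha> (fa_mult gen_u gen_d))) fa_one"

text \<open>Preimage in the free algebra of the ideal <omega> of A = A(alpha,0,1).\<close>
definition omega_ideal :: "'k::comm_ring_1 \<Rightarrow> 'k fa set" where
  "omega_ideal \<alpha> = two_sided_ideal (downup_rels \<alpha> 0 1 \<union> {dua_omega \<alpha>})"

text \<open>Preimage in the free algebra of <omega>^2 in A: generated by the defining
relations together with all products of two elements of (the preimage of) <omega>.\<close>
definition omega_sq :: "'k::comm_ring_1 \<Rightarrow> 'k fa set" where
  "omega_sq \<alpha> = two_sided_ideal (downup_rels \<alpha> 0 1 \<union>
      {fa_mult a b | a b. a \<in> omega_ideal \<alpha> \<and> b \<in> omega_ideal \<alpha>})"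

definition omega_basis :: "'k::comm_ring_1 \<Rightarrow> nat \<Rightarrow> nat \<Rightarrow> 'k fa" where
  "omega_basis \<alpha> i l = fa_mult (fa_pow gen_u i) (fa_mult (dua_omega \<alpha>) (fa_pow gen_d l))"

end

theory Submission
  imports Defs "HOL-Library.Poly_Mapping" "HOL-Library.Function_Algebras"
begin

text \<open>
  Write \<open>[n] = 1 + \<alpha> + \<dots> + \<alpha>^(n-1)\<close>. Modulo \<open>\<langle>\<omega>\<rangle>\<^sup>2\<close>, the relation
  \<open>du = \<omega> + \<alpha>ud + 1\<close> together with the defining relations \<open>d\<omega> = 0 = \<omega>u\<close> of \<open>A(\<alpha>,0,1)\<close>
  gives \<open>d u^i \<omega> d^l \<equiv> [i] u^(i-1) \<omega> d^l\<close> and \<open>u^i \<omega> d^l u \<equiv> [l] u^i \<omega> d^(l-1)\<close>, by induction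
  on \<open>i\<close> resp. \<open>l\<close>. Hence the span of the classes of the \<open>u^i \<omega> d^l\<close> is stable under
  multiplication by \<open>d\<close> and \<open>u\<close> on both sides; as it contains the class of \<open>\<omega>\<close>, it is all of
  \<open>\<langle>\<omega>\<rangle>/\<langle>\<omega>\<rangle>\<^sup>2\<close>.

  For independence, let the free algebra act on the space with basis \<open>e_i\<close>, \<open>f_(a,b)\<close>
  (\<open>i, a, b \<in> \<nat>\<close>) as follows: modulo the span \<open>W\<close> of the \<open>e_i\<close>, \<open>u\<close> and \<open>d\<close> act on \<open>f_(a,b)\<close>
  as on the monomial \<open>u^a d^b\<close> of the quantum Weyl algebra \<open>A/\<langle>\<omega>\<rangle>\<close>, while \<open>e_i\<close> plays the
  role of \<open>u^i \<omega> d^B\<close> for a fixed \<open>B \<ge> 1\<close>. The gluing is chosen so that the defining relations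
  act as zero and \<open>\<omega>\<close> acts as the rank one map \<open>f_(0,B) \<mapsto> e_0\<close>. Then every element of
  \<open>\<langle>\<omega>\<rangle>\<close> maps the space into \<open>W\<close> and kills \<open>W\<close>, so \<open>\<langle>\<omega>\<rangle>\<^sup>2\<close> acts as zero, whereas
  \<open>u^i \<omega> d^l\<close> maps \<open>f_(0,B-l)\<close> to \<open>e_i\<close>. Taking \<open>B\<close> larger than every \<open>l\<close> occurring in a
  linear combination isolates each of its coefficients.
\<close>

section \<open>The free algebra as a monoid algebra\<close>

lemma poly_mapping_sum_single:
  "p = (\<Sum>k\<in>Poly_Mapping.keys p. Poly_Mapping.single k (Poly_Mapping.lookup p k))"
proof (rule poly_mapping_eqI)
  fix k'
  show "Poly_Mapping.lookup p k' =
      Poly_Mapping.lookup (\<Sum>k\<in>Poly_Mapping.keys p. Poly_Mapping.single k (Poly_Mapping.lookup p k)) k'"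
    by (simp add: lookup_sum lookup_single when_def sum.delta in_keys_iff)
qed

lemma poly_mapping_induct [case_names zero single add]:
  fixes P :: "('a \<Rightarrow>\<^sub>0 'b::comm_monoid_add) \<Rightarrow> bool"
  assumes "P 0" and "\<And>k c. P (Poly_Mapping.single k c)" and "\<And>p q. P p \<Longrightarrow> P q \<Longrightarrow> P (p + q)"
  shows "P p"
proof -
  have "P (\<Sum>k\<in>A. Poly_Mapping.single k (f k))" if "finite A" for A f
    using that by (induction A rule: finite_induct) (simp_all add: assms)
  then show ?thesis by (subst poly_mapping_sum_single) simp
qed

text \<open>With concatenation as monoid addition on words, the monoid algebra \<open>word \<Rightarrow>\<^sub>0 'k\<close> is the
  free algebra encoded by \<open>'k fa\<close>, but carries the ring structure of \<open>Poly_Mapping\<close>;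
  \<open>to_fa\<close> and \<open>of_fa\<close> translate between the two encodings.\<close>

datatype word = Word (letters: "bool list")

instantiation word :: monoid_add
begin
definition zero_word_def: "0 = Word []"
definition plus_word_def: "x + y = Word (letters x @ letters y)"
instance by standard (auto simp: zero_word_def plus_word_def)
end

lemma Word_plus_Word [simp]: "Word v + Word w = Word (v @ w)"
  by (simp add: plus_word_def)

lemma letters_plus [simp]: "letters (x + y) = letters x @ letters y"
  by (simp add: plus_word_def)

lemma letters_zero [simp]: "letters 0 = []"
  by (simp add: zero_word_def)

lemma Word_eq_zero_iff [simp]: "Word w = 0 \<longleftrightarrow> w = []" "0 = Word w \<longleftrightarrow> w = []"
  by (auto simp: zero_word_def)

type_synonym 'k freealg = "word \<Rightarrow>\<^sub>0 'k"

definition to_fa :: "('k::zero) freealg \<Rightarrow> 'k fa" where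
  "to_fa p = (\<lambda>w. Poly_Mapping.lookup p (Word w))"

definition of_fa :: "('k::zero) fa \<Rightarrow> 'k freealg" where
  "of_fa f = Abs_poly_mapping (\<lambda>x. f (letters x))"

lemma to_fa_in_carrier: "to_fa p \<in> fa_carrier"
proof -
  have "{w. Poly_Mapping.lookup p (Word w) \<noteq> 0} \<subseteq> letters ` Poly_Mapping.keys p"
    by (auto simp: in_keys_iff image_iff intro!: bexI[of _ "Word _"])
  then show ?thesis
    unfolding fa_carrier_def to_fa_def by (auto intro: finite_subset)
qed

lemma to_fa_of_fa: "f \<in> fa_carrier \<Longrightarrow> to_fa (of_fa f) = f"
proof -
  assume "f \<in> fa_carrier"
  then have "finite (Word ` {w. f w \<noteq> 0})" by (simp add: fa_carrier_def)
  moreover have "{x. f (letters x) \<noteq> 0} \<subseteq> Word ` {w. f w \<noteq> 0}"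
    by (auto simp: image_iff intro!: exI[of _ "letters _"])
  ultimately have "Poly_Mapping.lookup (of_fa f) = (\<lambda>x. f (letters x))"
    unfolding of_fa_def by (intro lookup_Abs_poly_mapping) (rule finite_subset)
  then show ?thesis by (simp add: to_fa_def)
qed

lemma of_fa_to_fa [simp]: "of_fa (to_fa p) = p"
  unfolding to_fa_def of_fa_def by (simp add: lookup_inverse)

lemma to_fa_0: "to_fa 0 = fa_zero"
  by (simp add: to_fa_def fa_zero_def)

lemma to_fa_1: "to_fa (1::'k::zero_neq_one freealg) = fa_one"
  by (auto simp: to_fa_def fa_one_def fa_mono_def lookup_one)

lemma to_fa_add: "to_fa (p + q) = fa_add (to_fa p) (to_fa q)"
  by (simp add: to_fa_def fa_add_def lookup_add)

lemma to_fa_diff: "to_fa (p - (q::'k::ab_group_add freealg)) = fa_sub (to_fa p) (to_fa q)"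
  by (simp add: to_fa_def fa_sub_def lookup_minus)

lemma to_fa_sum: "to_fa (\<Sum>x\<in>S. f x) = fa_sum S (\<lambda>x. to_fa (f x))"
  by (simp add: to_fa_def fa_sum_def lookup_sum)

lemma to_fa_mult: "to_fa (p * q) = fa_mult (to_fa p) (to_fa (q::'k::comm_semiring_1 freealg))"
proof (rule ext)
  fix w
  let ?f = "Poly_Mapping.lookup p" and ?g = "Poly_Mapping.lookup q"
  let ?split = "\<lambda>i. (Word (take i w), Word (drop i w))"
  let ?h = "\<lambda>(a, b). ?f a * ?g b when Word w = a + b"
  have split_onto: "{ab. ?h ab \<noteq> 0} \<subseteq> ?split ` {..length w}"
  proof
    fix ab assume "ab \<in> {ab. ?h ab \<noteq> 0}"
    then obtain a b where "ab = (a, b)" "w = letters a @ letters b"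
      by (cases ab) (auto simp: plus_word_def when_def split: if_splits)
    then show "ab \<in> ?split ` {..length w}"
      by (auto simp: image_iff intro!: bexI[of _ "length (letters a)"])
  qed
  have "inj_on ?split {..length w}"
    by (rule inj_onI) (metis atMost_iff length_take min.absorb2 word.inject prod.inject)
  then have "Poly_Mapping.lookup (p * q) (Word w) = (\<Sum>i\<le>length w. ?h (?split i))"
    using Sum_any.expand_superset[OF _ split_onto]
    by (simp add: times_poly_mapping.rep_eq prod_fun_unfold_prod sum.reindex)
  also have "\<dots> = (\<Sum>i\<le>length w. ?f (Word (take i w)) * ?g (Word (drop i w)))"
    by (rule sum.cong) (auto simp: when_def)
  finally show "to_fa (p * q) w = fa_mult (to_fa p) (to_fa q) w"
    by (simp add: to_fa_def fa_mult_def)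
qed

lemma to_fa_power: "to_fa ((p::'k::comm_semiring_1 freealg) ^ n) = fa_pow (to_fa p) n"
  by (induction n) (simp_all add: to_fa_1 to_fa_mult)

definition scalar :: "'k::zero \<Rightarrow> 'k freealg" where
  "scalar c = Poly_Mapping.single 0 c"

lemma scalar_0 [simp]: "scalar 0 = 0"
  by (simp add: scalar_def)

lemma scalar_1 [simp]: "scalar 1 = 1"
  by (simp add: scalar_def)

lemma scalar_add: "scalar (a + b) = scalar a + scalar b"
  by (simp add: scalar_def single_add)

lemma scalar_mult_scalar: "scalar a * scalar b = scalar (a * b)"
  by (simp add: scalar_def mult_single)

lemma lookup_scalar_mult:
  "Poly_Mapping.lookup (scalar c * p) x = c * Poly_Mapping.lookup (p::'k::comm_semiring_1 freealg) x"
  by (simp flip: mult_map_scale_conv_mult add: scalar_def map.rep_eq when_def)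

lemma to_fa_scalar_mult: "to_fa (scalar c * (p::'k::comm_semiring_1 freealg)) = fa_smult c (to_fa p)"
  by (simp add: to_fa_def fa_smult_def lookup_scalar_mult)

lemma mult_scalar_commute: "p * scalar c = scalar c * (p::'k::comm_semiring_1 freealg)"
proof (induction p rule: poly_mapping_induct)
  case (single k a)
  show ?case by (simp add: scalar_def mult_single mult.commute)
qed (simp_all add: distrib_left distrib_right)

lemma mult_scalar_left_commute: "p * (scalar c * q) = scalar c * (p * (q::'k::comm_semiring_1 freealg))"
  by (metis mult.assoc mult_scalar_commute)

lemma scalar_mult_scalar_mult: "scalar a * (scalar b * p) = scalar (a * b) * (p::'k::comm_semiring_1 freealg)"
  by (simp add: mult.assoc[symmetric] scalar_mult_scalar)

definition gen_D :: "'k::comm_ring_1 freealg" where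
  "gen_D = Poly_Mapping.single (Word [True]) 1"

definition gen_U :: "'k::comm_ring_1 freealg" where
  "gen_U = Poly_Mapping.single (Word [False]) 1"

definition Omega :: "'k::comm_ring_1 \<Rightarrow> 'k freealg" where
  "Omega \<alpha> = gen_D * gen_U - scalar \<alpha> * (gen_U * gen_D) - 1"

definition Omega_basis :: "'k::comm_ring_1 \<Rightarrow> nat \<Rightarrow> nat \<Rightarrow> 'k freealg" where
  "Omega_basis \<alpha> i l = gen_U ^ i * (Omega \<alpha> * gen_D ^ l)"

lemma to_fa_gen_D: "to_fa gen_D = gen_d"
  by (auto simp: to_fa_def gen_D_def gen_d_def fa_mono_def lookup_single when_def)

lemma to_fa_gen_U: "to_fa gen_U = gen_u"
  by (auto simp: to_fa_def gen_U_def gen_u_def fa_mono_def lookup_single when_def)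

lemma to_fa_Omega: "to_fa (Omega \<alpha>) = dua_omega \<alpha>"
  unfolding Omega_def dua_omega_def to_fa_diff to_fa_scalar_mult
  by (simp add: to_fa_1 to_fa_mult to_fa_gen_D to_fa_gen_U)

lemma to_fa_Omega_basis: "to_fa (Omega_basis \<alpha> i l) = omega_basis \<alpha> i l"
  by (simp add: Omega_basis_def omega_basis_def to_fa_mult to_fa_power to_fa_Omega
      to_fa_gen_U to_fa_gen_D)

lemma U_mult_Omega_basis: "gen_U * Omega_basis \<alpha> i l = Omega_basis \<alpha> (Suc i) l"
  by (simp add: Omega_basis_def mult.assoc)

lemma Omega_basis_mult_D: "Omega_basis \<alpha> i l * gen_D = Omega_basis \<alpha> i (Suc l)"
  by (simp add: Omega_basis_def mult.assoc power_Suc2 del: power_Suc)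

lemma D_mult_U_eq: "gen_D * gen_U = Omega \<alpha> + scalar \<alpha> * (gen_U * gen_D) + 1"
  by (simp add: Omega_def)

primrec word_monomial :: "bool list \<Rightarrow> 'k::comm_ring_1 freealg" where
  "word_monomial [] = 1"
| "word_monomial (b # w) = (if b then gen_D else gen_U) * word_monomial w"

lemma single_eq_scalar_mult_word_monomial:
  "Poly_Mapping.single (Word w) c = scalar c * (word_monomial w :: 'k::comm_ring_1 freealg)"
proof (induction w arbitrary: c)
  case Nil
  show ?case by (simp add: scalar_def zero_word_def)
next
  case (Cons b w)
  have "Poly_Mapping.single (Word (b # w)) c = Poly_Mapping.single (Word [b]) 1 * Poly_Mapping.single (Word w) c"
    by (simp add: mult_single)
  then show ?case
    using Cons by (cases b) (simp_all add: gen_D_def[symmetric] gen_U_def[symmetric] mult_scalar_left_commute)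
qed

lemma freealg_induct [case_names zero add scalar_word]:
  fixes P :: "'k::comm_ring_1 freealg \<Rightarrow> bool"
  assumes "P 0" and "\<And>p q. P p \<Longrightarrow> P q \<Longrightarrow> P (p + q)"
    and "\<And>c w. P (scalar c * word_monomial w)"
  shows "P p"
  using assms by (induction p rule: poly_mapping_induct) (metis word.collapse single_eq_scalar_mult_word_monomial)+

section \<open>Two-sided ideals of the free algebra\<close>

locale freealg_ideal =
  fixes X :: "'k::comm_ring_1 freealg set"
  assumes zero_mem: "0 \<in> X"
    and add_mem: "a \<in> X \<Longrightarrow> b \<in> X \<Longrightarrow> a + b \<in> X"
    and mult_mem: "a \<in> X \<Longrightarrow> x * a * y \<in> X"
begin

lemma mult_left_mem: "a \<in> X \<Longrightarrow> x * a \<in> X"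
  using mult_mem[of a x 1] by simp

lemma mult_right_mem: "a \<in> X \<Longrightarrow> a * y \<in> X"
  using mult_mem[of a 1 y] by simp

end

lemma two_sided_ideal_in_carrier: "f \<in> two_sided_ideal S \<Longrightarrow> f \<in> fa_carrier"
  by (induction rule: two_sided_ideal.induct) (metis to_fa_in_carrier to_fa_0 to_fa_add to_fa_mult to_fa_of_fa)+

lemma freealg_ideal_vimage: "freealg_ideal (to_fa -` two_sided_ideal S)"
  by unfold_locales (simp_all add: to_fa_0 to_fa_add to_fa_mult to_fa_in_carrier two_sided_ideal.intros mult.assoc)

lemma of_fa_add: "f \<in> fa_carrier \<Longrightarrow> g \<in> fa_carrier \<Longrightarrow> of_fa (fa_add f g) = of_fa f + of_fa g"
  by (metis of_fa_to_fa to_fa_add to_fa_of_fa)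

lemma of_fa_mult: "f \<in> fa_carrier \<Longrightarrow> g \<in> fa_carrier \<Longrightarrow> of_fa (fa_mult f g) = of_fa f * of_fa g"
  by (metis of_fa_to_fa to_fa_mult to_fa_of_fa)

lemma two_sided_ideal_induct [consumes 1, case_names gen zero add mult]:
  assumes "f \<in> two_sided_ideal S"
    and "\<And>s. s \<in> S \<Longrightarrow> s \<in> fa_carrier \<Longrightarrow> P (of_fa s)" and "P 0"
    and "\<And>a b. P a \<Longrightarrow> P b \<Longrightarrow> P (a + b)" and "\<And>a x y. P a \<Longrightarrow> P (x * a * y)"
  shows "P (of_fa f)"
  using assms(1)
proof (induction rule: two_sided_ideal.induct)
  case zero
  show ?case using assms(3) by (metis of_fa_to_fa to_fa_0)
next
  case (add a b)
  then show ?case by (simp add: of_fa_add two_sided_ideal_in_carrier assms(4))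
next
  case (mult a x y)
  have "fa_mult a y \<in> fa_carrier"
    using mult.hyps by (metis to_fa_in_carrier to_fa_mult to_fa_of_fa two_sided_ideal_in_carrier)
  then have "of_fa (fa_mult x (fa_mult a y)) = of_fa x * of_fa a * of_fa y"
    using mult.hyps by (simp add: of_fa_mult two_sided_ideal_in_carrier mult.assoc)
  then show ?case using assms(5)[OF mult.IH] by simp
qed (rule assms(2))

definition I_omega :: "'k::comm_ring_1 \<Rightarrow> 'k freealg set" where
  "I_omega \<alpha> = to_fa -` omega_ideal \<alpha>"

definition J_omega :: "'k::comm_ring_1 \<Rightarrow> 'k freealg set" where
  "J_omega \<alpha> = to_fa -` omega_sq \<alpha>"

interpretation I_omega: freealg_ideal "I_omega \<alpha>" for \<alpha>
  unfolding I_omega_def omega_ideal_def by (rule freealg_ideal_vimage)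

interpretation J_omega: freealg_ideal "J_omega \<alpha>" for \<alpha>
  unfolding J_omega_def omega_sq_def by (rule freealg_ideal_vimage)

lemma Omega_in_I_omega: "Omega \<alpha> \<in> I_omega \<alpha>"
  unfolding I_omega_def omega_ideal_def
  using to_fa_in_carrier[of "Omega \<alpha>"] by (simp add: to_fa_Omega two_sided_ideal.gen)

lemma Omega_basis_in_I_omega: "Omega_basis \<alpha> i l \<in> I_omega \<alpha>"
  unfolding Omega_basis_def by (intro I_omega.mult_left_mem I_omega.mult_right_mem Omega_in_I_omega)

lemma mult_in_J_omega: "a \<in> I_omega \<alpha> \<Longrightarrow> b \<in> I_omega \<alpha> \<Longrightarrow> a * b \<in> J_omega \<alpha>"
  unfolding I_omega_def J_omega_def omega_sq_def
  using to_fa_in_carrier[of "a * b", unfolded to_fa_mult]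
  by (auto intro!: two_sided_ideal.gen simp: to_fa_mult)

lemma downup_rels_eq: "downup_rels \<alpha> 0 1 = {to_fa (gen_D * Omega \<alpha>), to_fa (Omega \<alpha> * gen_U)}"
proof -
  have eqs: "gen_D * Omega \<alpha> = gen_D * (gen_D * gen_U)
      - (scalar \<alpha> * (gen_D * (gen_U * gen_D)) + (scalar 0 * (gen_U * (gen_D * gen_D)) + scalar 1 * gen_D))"
   and "Omega \<alpha> * gen_U = gen_D * (gen_U * gen_U)
      - (scalar \<alpha> * (gen_U * (gen_D * gen_U)) + (scalar 0 * (gen_U * (gen_U * gen_D)) + scalar 1 * gen_U))"
    by (simp_all add: Omega_def algebra_simps mult_scalar_left_commute)
  then show ?thesis
    unfolding downup_rels_def
    by (simp only: eqs to_fa_diff to_fa_add to_fa_scalar_mult)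
      (simp only: to_fa_mult to_fa_gen_D to_fa_gen_U)
qed

lemma D_mult_Omega_in_J_omega: "gen_D * Omega \<alpha> \<in> J_omega \<alpha>"
  unfolding J_omega_def omega_sq_def by (auto intro!: two_sided_ideal.gen simp: downup_rels_eq to_fa_in_carrier)

lemma Omega_mult_U_in_J_omega: "Omega \<alpha> * gen_U \<in> J_omega \<alpha>"
  unfolding J_omega_def omega_sq_def by (auto intro!: two_sided_ideal.gen simp: downup_rels_eq to_fa_in_carrier)

lemma of_fa_downup_rels_in_J_omega: "s \<in> downup_rels \<alpha> 0 1 \<Longrightarrow> of_fa s \<in> J_omega \<alpha>"
  using D_mult_Omega_in_J_omega Omega_mult_U_in_J_omega by (auto simp: downup_rels_eq)

section \<open>Commutation rules modulo \<open>\<langle>\<omega>\<rangle>\<^sup>2\<close>\<close>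

definition qint :: "'k::comm_semiring_1 \<Rightarrow> nat \<Rightarrow> 'k" where
  "qint \<alpha> n = (\<Sum>k<n. \<alpha> ^ k)"

lemma qint_0 [simp]: "qint \<alpha> 0 = 0"
  by (simp add: qint_def)

lemma qint_Suc: "qint \<alpha> (Suc n) = 1 + \<alpha> * qint \<alpha> n"
  unfolding qint_def sum.lessThan_Suc_shift by (simp add: sum_distrib_left)

lemma qint_eq_quotient: "(\<alpha>::'k::field) \<noteq> 1 \<Longrightarrow> qint \<alpha> n = (\<alpha> ^ n - 1) / (\<alpha> - 1)"
  by (metis qint_def sum_gp_strict minus_diff_eq minus_divide_divide)

lemma D_mult_Omega_basis_Suc:
  "gen_D * Omega_basis \<alpha> (Suc i) l - scalar (qint \<alpha> (Suc i)) * Omega_basis \<alpha> i l \<in> J_omega \<alpha>"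
proof (induction i)
  case 0
  have "gen_D * Omega_basis \<alpha> (Suc 0) l - scalar (qint \<alpha> (Suc 0)) * Omega_basis \<alpha> 0 l
      = (gen_D * gen_U) * (Omega \<alpha> * gen_D ^ l) - Omega \<alpha> * gen_D ^ l"
    by (simp add: Omega_basis_def qint_def mult.assoc)
  also have "\<dots> = Omega \<alpha> * Omega \<alpha> * gen_D ^ l + (scalar \<alpha> * gen_U) * (gen_D * Omega \<alpha>) * gen_D ^ l"
    by (simp only: D_mult_U_eq[of \<alpha>]) (simp add: algebra_simps)
  also have "\<dots> \<in> J_omega \<alpha>"
    by (blast intro: J_omega.add_mem J_omega.mult_mem J_omega.mult_right_mem mult_in_J_omega
        Omega_in_I_omega D_mult_Omega_in_J_omega)
  finally show ?case .
next
  case (Suc i)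
  let ?X = "Omega_basis \<alpha> (Suc i) l" and ?Y = "Omega_basis \<alpha> i l"
  have DX: "gen_D * Omega_basis \<alpha> (Suc (Suc i)) l = (gen_D * gen_U) * ?X"
    by (simp add: Omega_basis_def mult.assoc)
  have qX: "scalar (qint \<alpha> (Suc (Suc i))) * ?X = ?X + scalar \<alpha> * gen_U * (scalar (qint \<alpha> (Suc i)) * ?Y)"
    by (simp add: qint_Suc[of \<alpha> "Suc i"] scalar_add distrib_right mult_scalar_left_commute[of gen_U]
        scalar_mult_scalar_mult Omega_basis_def mult.assoc)
  have "gen_D * Omega_basis \<alpha> (Suc (Suc i)) l - scalar (qint \<alpha> (Suc (Suc i))) * ?X
      = Omega \<alpha> * ?X + scalar \<alpha> * gen_U * (gen_D * ?X - scalar (qint \<alpha> (Suc i)) * ?Y)"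
    unfolding DX qX D_mult_U_eq[of \<alpha>] by (simp add: algebra_simps)
  also have "\<dots> \<in> J_omega \<alpha>"
    using Suc.IH by (blast intro: J_omega.add_mem J_omega.mult_left_mem mult_in_J_omega Omega_in_I_omega Omega_basis_in_I_omega)
  finally show ?case .
qed

lemma Omega_basis_Suc_mult_U:
  "Omega_basis \<alpha> i (Suc l) * gen_U - scalar (qint \<alpha> (Suc l)) * Omega_basis \<alpha> i l \<in> J_omega \<alpha>"
proof (induction l)
  case 0
  have "Omega_basis \<alpha> i (Suc 0) * gen_U - scalar (qint \<alpha> (Suc 0)) * Omega_basis \<alpha> i 0
      = gen_U ^ i * Omega \<alpha> * (gen_D * gen_U) - gen_U ^ i * Omega \<alpha>"
    by (simp add: Omega_basis_def qint_def mult.assoc)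
  also have "\<dots> = gen_U ^ i * (Omega \<alpha> * Omega \<alpha>) + scalar \<alpha> * gen_U ^ i * (Omega \<alpha> * gen_U) * gen_D"
    by (simp only: D_mult_U_eq[of \<alpha>])
      (simp add: algebra_simps mult_scalar_left_commute[of "Omega \<alpha>"] mult_scalar_left_commute[of "gen_U ^ i"])
  also have "\<dots> \<in> J_omega \<alpha>"
    by (blast intro: J_omega.add_mem J_omega.mult_mem J_omega.mult_left_mem mult_in_J_omega
        Omega_in_I_omega Omega_mult_U_in_J_omega)
  finally show ?case .
next
  case (Suc l)
  let ?X = "Omega_basis \<alpha> i (Suc l)" and ?Y = "Omega_basis \<alpha> i l"
  have XU: "Omega_basis \<alpha> i (Suc (Suc l)) * gen_U = ?X * (gen_D * gen_U)"
    by (simp add: Omega_basis_def mult.assoc power_Suc2 del: power_Suc)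
  have qX: "scalar (qint \<alpha> (Suc (Suc l))) * ?X = ?X + scalar \<alpha> * (scalar (qint \<alpha> (Suc l)) * ?Y) * gen_D"
    by (simp add: qint_Suc[of \<alpha> "Suc l"] scalar_add distrib_right scalar_mult_scalar_mult
        Omega_basis_def mult.assoc power_Suc2 del: power_Suc)
  have "Omega_basis \<alpha> i (Suc (Suc l)) * gen_U - scalar (qint \<alpha> (Suc (Suc l))) * ?X
      = ?X * Omega \<alpha> + scalar \<alpha> * (?X * gen_U - scalar (qint \<alpha> (Suc l)) * ?Y) * gen_D"
    unfolding XU qX D_mult_U_eq[of \<alpha>] by (simp add: algebra_simps mult_scalar_left_commute[of ?X])
  also have "\<dots> \<in> J_omega \<alpha>"
    using Suc.IH by (blast intro: J_omega.add_mem J_omega.mult_mem mult_in_J_omega Omega_in_I_omega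
        Omega_basis_in_I_omega)
  finally show ?case .
qed

lemma D_mult_Omega_basis:
  "gen_D * Omega_basis \<alpha> i l - scalar (qint \<alpha> i) * Omega_basis \<alpha> (i - 1) l \<in> J_omega \<alpha>"
proof (cases i)
  case 0
  then show ?thesis
    using J_omega.mult_right_mem[OF D_mult_Omega_in_J_omega]
    by (simp add: Omega_basis_def mult.assoc)
qed (simp add: D_mult_Omega_basis_Suc)

lemma Omega_basis_mult_U:
  "Omega_basis \<alpha> i l * gen_U - scalar (qint \<alpha> l) * Omega_basis \<alpha> i (l - 1) \<in> J_omega \<alpha>"
proof (cases l)
  case 0
  then show ?thesis
    using J_omega.mult_left_mem[OF Omega_mult_U_in_J_omega]
    by (simp add: Omega_basis_def mult.assoc)
qed (simp add: Omega_basis_Suc_mult_U)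

section \<open>The classes of the \<open>u^i \<omega> d^l\<close> span \<open>\<langle>\<omega>\<rangle>/\<langle>\<omega>\<rangle>\<^sup>2\<close>\<close>

definition Omega_comb :: "'k::comm_ring_1 \<Rightarrow> (nat \<times> nat) set \<Rightarrow> (nat \<times> nat \<Rightarrow> 'k) \<Rightarrow> 'k freealg" where
  "Omega_comb \<alpha> S c = (\<Sum>x\<in>S. scalar (c x) * Omega_basis \<alpha> (fst x) (snd x))"

definition in_basis_span :: "'k::comm_ring_1 \<Rightarrow> 'k freealg \<Rightarrow> bool" where
  "in_basis_span \<alpha> q \<longleftrightarrow> (\<exists>S c. finite S \<and> q - Omega_comb \<alpha> S c \<in> J_omega \<alpha>)"

lemma to_fa_Omega_comb:
  "to_fa (Omega_comb \<alpha> S c) = fa_sum S (\<lambda>x. fa_smult (c x) (omega_basis \<alpha> (fst x) (snd x)))"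
  by (simp add: Omega_comb_def to_fa_sum to_fa_scalar_mult to_fa_Omega_basis)

lemma Omega_comb_restrict:
  "finite T \<Longrightarrow> S \<subseteq> T \<Longrightarrow> Omega_comb \<alpha> T (\<lambda>x. if x \<in> S then c x else 0) = Omega_comb \<alpha> S c"
  unfolding Omega_comb_def by (simp add: if_distrib[of scalar] if_distrib[of "\<lambda>a. a * _"] sum.If_cases Int_absorb1)

lemma in_basis_span_J_omega: "q \<in> J_omega \<alpha> \<Longrightarrow> in_basis_span \<alpha> q"
  unfolding in_basis_span_def by (rule exI[of _ "{}"]) (simp add: Omega_comb_def)

lemma in_basis_span_cong: "in_basis_span \<alpha> q' \<Longrightarrow> q - q' \<in> J_omega \<alpha> \<Longrightarrow> in_basis_span \<alpha> q"
  unfolding in_basis_span_def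
  using J_omega.add_mem[of "q - q'"] by (metis diff_add_cancel add_diff_eq)

lemma in_basis_span_add: "in_basis_span \<alpha> a \<Longrightarrow> in_basis_span \<alpha> b \<Longrightarrow> in_basis_span \<alpha> (a + b)"
proof -
  assume "in_basis_span \<alpha> a" "in_basis_span \<alpha> b"
  then obtain S1 c1 S2 c2 where fin: "finite S1" "finite S2"
    and a: "a - Omega_comb \<alpha> S1 c1 \<in> J_omega \<alpha>" and b: "b - Omega_comb \<alpha> S2 c2 \<in> J_omega \<alpha>"
    unfolding in_basis_span_def by blast
  let ?c = "\<lambda>x. (if x \<in> S1 then c1 x else 0) + (if x \<in> S2 then c2 x else 0)"
  have "Omega_comb \<alpha> (S1 \<union> S2) ?c = Omega_comb \<alpha> (S1 \<union> S2) (\<lambda>x. if x \<in> S1 then c1 x else 0)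
      + Omega_comb \<alpha> (S1 \<union> S2) (\<lambda>x. if x \<in> S2 then c2 x else 0)"
    by (simp add: Omega_comb_def scalar_add distrib_right sum.distrib)
  also have "\<dots> = Omega_comb \<alpha> S1 c1 + Omega_comb \<alpha> S2 c2"
    using fin by (simp add: Omega_comb_restrict)
  finally have "Omega_comb \<alpha> (S1 \<union> S2) ?c = Omega_comb \<alpha> S1 c1 + Omega_comb \<alpha> S2 c2" .
  then have "a + b - Omega_comb \<alpha> (S1 \<union> S2) ?c = (a - Omega_comb \<alpha> S1 c1) + (b - Omega_comb \<alpha> S2 c2)"
    by (simp add: algebra_simps)
  then have "a + b - Omega_comb \<alpha> (S1 \<union> S2) ?c \<in> J_omega \<alpha>"
    using J_omega.add_mem[OF a b] by (simp only:)
  then show ?thesis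
    unfolding in_basis_span_def using fin by (intro exI[of _ "S1 \<union> S2"] exI[of _ ?c]) simp
qed

lemma in_basis_span_scalar_mult: "in_basis_span \<alpha> q \<Longrightarrow> in_basis_span \<alpha> (scalar a * q)"
proof -
  assume "in_basis_span \<alpha> q"
  then obtain S c where "finite S" and q: "q - Omega_comb \<alpha> S c \<in> J_omega \<alpha>"
    unfolding in_basis_span_def by blast
  have "scalar a * q - Omega_comb \<alpha> S (\<lambda>x. a * c x) = scalar a * (q - Omega_comb \<alpha> S c)"
    by (simp add: Omega_comb_def sum_distrib_left scalar_mult_scalar_mult right_diff_distrib)
  then show ?thesis
    unfolding in_basis_span_def using \<open>finite S\<close> J_omega.mult_left_mem[OF q]
    by (intro exI[of _ S] exI[of _ "\<lambda>x. a * c x"]) simp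
qed

lemma in_basis_span_sum:
  "finite A \<Longrightarrow> (\<And>x. x \<in> A \<Longrightarrow> in_basis_span \<alpha> (f x)) \<Longrightarrow> in_basis_span \<alpha> (\<Sum>x\<in>A. f x)"
  by (induction A rule: finite_induct)
    (auto intro: in_basis_span_add in_basis_span_J_omega J_omega.zero_mem)

lemma in_basis_span_Omega_basis: "in_basis_span \<alpha> (Omega_basis \<alpha> i l)"
  unfolding in_basis_span_def
  by (rule exI[of _ "{(i, l)}"], rule exI[of _ "\<lambda>_. 1"])
    (simp add: Omega_comb_def J_omega.zero_mem)

lemma in_basis_span_mult_left:
  assumes "in_basis_span \<alpha> q" and "\<And>i l. in_basis_span \<alpha> (x * Omega_basis \<alpha> i l)"
  shows "in_basis_span \<alpha> (x * q)"
proof -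
  obtain S c where "finite S" and q: "q - Omega_comb \<alpha> S c \<in> J_omega \<alpha>"
    using assms(1) unfolding in_basis_span_def by blast
  have "in_basis_span \<alpha> (x * Omega_comb \<alpha> S c)"
    unfolding Omega_comb_def sum_distrib_left mult_scalar_left_commute[of x]
    using \<open>finite S\<close> by (intro in_basis_span_sum in_basis_span_scalar_mult assms(2))
  moreover have "x * q - x * Omega_comb \<alpha> S c \<in> J_omega \<alpha>"
    using J_omega.mult_left_mem[OF q, of x] by (simp add: right_diff_distrib)
  ultimately show ?thesis by (rule in_basis_span_cong)
qed

lemma in_basis_span_mult_right:
  assumes "in_basis_span \<alpha> q" and "\<And>i l. in_basis_span \<alpha> (Omega_basis \<alpha> i l * x)"
  shows "in_basis_span \<alpha> (q * x)"
proof -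
  obtain S c where "finite S" and q: "q - Omega_comb \<alpha> S c \<in> J_omega \<alpha>"
    using assms(1) unfolding in_basis_span_def by blast
  have "in_basis_span \<alpha> (Omega_comb \<alpha> S c * x)"
    unfolding Omega_comb_def sum_distrib_right mult.assoc
    using \<open>finite S\<close> by (intro in_basis_span_sum in_basis_span_scalar_mult assms(2))
  moreover have "q * x - Omega_comb \<alpha> S c * x \<in> J_omega \<alpha>"
    using J_omega.mult_right_mem[OF q, of x] by (simp add: left_diff_distrib)
  ultimately show ?thesis by (rule in_basis_span_cong)
qed

lemma in_basis_span_D_mult: "in_basis_span \<alpha> q \<Longrightarrow> in_basis_span \<alpha> (gen_D * q)"
  by (erule in_basis_span_mult_left)
    (rule in_basis_span_cong[OF in_basis_span_scalar_mult[OF in_basis_span_Omega_basis] D_mult_Omega_basis])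

lemma in_basis_span_U_mult: "in_basis_span \<alpha> q \<Longrightarrow> in_basis_span \<alpha> (gen_U * q)"
  by (erule in_basis_span_mult_left) (simp add: U_mult_Omega_basis in_basis_span_Omega_basis)

lemma in_basis_span_mult_D: "in_basis_span \<alpha> q \<Longrightarrow> in_basis_span \<alpha> (q * gen_D)"
  by (erule in_basis_span_mult_right) (simp add: Omega_basis_mult_D in_basis_span_Omega_basis)

lemma in_basis_span_mult_U: "in_basis_span \<alpha> q \<Longrightarrow> in_basis_span \<alpha> (q * gen_U)"
  by (erule in_basis_span_mult_right)
    (rule in_basis_span_cong[OF in_basis_span_scalar_mult[OF in_basis_span_Omega_basis] Omega_basis_mult_U])

lemma in_basis_span_word_monomial_mult:
  "in_basis_span \<alpha> q \<Longrightarrow> in_basis_span \<alpha> (word_monomial w * q)"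
  by (induction w) (auto simp: mult.assoc in_basis_span_D_mult in_basis_span_U_mult)

lemma in_basis_span_mult_word_monomial:
  "in_basis_span \<alpha> q \<Longrightarrow> in_basis_span \<alpha> (q * word_monomial w)"
proof (induction w arbitrary: q)
  case (Cons b w)
  then have "in_basis_span \<alpha> (q * (if b then gen_D else gen_U) * word_monomial w)"
    by (simp add: in_basis_span_mult_D in_basis_span_mult_U)
  then show ?case by (simp add: mult.assoc)
qed simp

lemma in_basis_span_two_sided:
  assumes "in_basis_span \<alpha> q"
  shows "in_basis_span \<alpha> (x * q * y)"
proof -
  have "in_basis_span \<alpha> (x * q)"
  proof (induction x rule: freealg_induct)
    case zero
    show ?case by (simp add: in_basis_span_J_omega J_omega.zero_mem)
  next
    case (add p p')
    then show ?case by (simp add: distrib_right in_basis_span_add)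
  next
    case (scalar_word c w)
    show ?case
      using assms by (simp add: mult.assoc in_basis_span_scalar_mult in_basis_span_word_monomial_mult)
  qed
  then show ?thesis
  proof (induction y rule: freealg_induct)
    case zero
    show ?case by (simp add: in_basis_span_J_omega J_omega.zero_mem)
  next
    case (add p p')
    then show ?case by (simp add: distrib_left in_basis_span_add)
  next
    case (scalar_word c w)
    then show ?case
      by (simp add: mult_scalar_left_commute[of "x * q"] in_basis_span_scalar_mult in_basis_span_mult_word_monomial)
  qed
qed

lemma in_basis_span_I_omega:
  assumes "p \<in> I_omega \<alpha>"
  shows "in_basis_span \<alpha> p"
proof -
  have "to_fa p \<in> two_sided_ideal (downup_rels \<alpha> 0 1 \<union> {dua_omega \<alpha>})"
    using assms by (simp add: I_omega_def omega_ideal_def)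
  then have "in_basis_span \<alpha> (of_fa (to_fa p))"
  proof (induction rule: two_sided_ideal_induct)
    case (gen s)
    then show ?case
      using in_basis_span_Omega_basis[of \<alpha> 0 0]
      by (auto simp: in_basis_span_J_omega of_fa_downup_rels_in_J_omega Omega_basis_def
          simp flip: to_fa_Omega)
  next
    case zero
    show ?case by (simp add: in_basis_span_J_omega J_omega.zero_mem)
  next
    case (add a b)
    then show ?case by (rule in_basis_span_add)
  next
    case (mult a x y)
    then show ?case by (rule in_basis_span_two_sided)
  qed
  then show ?thesis by simp
qed

lemma omega_ideal_spanned_mod_sq:
  fixes \<alpha> :: "'k::comm_ring_1"
  assumes "p \<in> omega_ideal \<alpha>"
  shows "\<exists>S c. finite S \<and>
    fa_sub p (fa_sum S (\<lambda>x. fa_smult (c x) (omega_basis \<alpha> (fst x) (snd x)))) \<in> omega_sq \<alpha>"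
proof -
  have "p \<in> fa_carrier"
    using assms unfolding omega_ideal_def by (rule two_sided_ideal_in_carrier)
  moreover obtain S c where "finite S" and "of_fa p - Omega_comb \<alpha> S c \<in> J_omega \<alpha>"
    using in_basis_span_I_omega[of "of_fa p" \<alpha>] assms \<open>p \<in> fa_carrier\<close>
    unfolding in_basis_span_def by (auto simp: I_omega_def to_fa_of_fa)
  ultimately show ?thesis
    by (auto simp: J_omega_def to_fa_diff to_fa_of_fa to_fa_Omega_comb)
qed

section \<open>A representation separating the classes of the \<open>u^i \<omega> d^l\<close>\<close>

text \<open>Vectors are coefficient functions on the basis \<open>e_i = Inl i\<close>, \<open>f_(a,b) = Inr (a, b)\<close>.\<close>

type_synonym 'k vec = "nat + nat \<times> nat \<Rightarrow> 'k"

definition scale_vec :: "'k::comm_ring_1 \<Rightarrow> 'k vec \<Rightarrow> 'k vec" where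
  "scale_vec c v = (\<lambda>k. c * v k)"

definition is_linear :: "('k::comm_ring_1 vec \<Rightarrow> 'k vec) \<Rightarrow> bool" where
  "is_linear T \<longleftrightarrow> (\<forall>v w. T (v + w) = T v + T w) \<and> (\<forall>c v. T (scale_vec c v) = scale_vec c (T v))"

lemma scale_vec_0 [simp]: "scale_vec 0 v = 0"
  by (simp add: scale_vec_def zero_fun_def)

lemma is_linear_zero: "is_linear T \<Longrightarrow> T 0 = 0"
  unfolding is_linear_def by (metis scale_vec_0)

definition act_D :: "'k::comm_ring_1 \<Rightarrow> nat \<Rightarrow> 'k vec \<Rightarrow> 'k vec" where
  "act_D \<alpha> B v = (\<lambda>k. case k of
     Inl i \<Rightarrow> qint \<alpha> (Suc i) * v (Inl (Suc i)) +
        (if 1 \<le> i then \<alpha> ^ i * (v (Inr (i, B - 1)) + v (Inr (Suc i, B))) else 0)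
   | Inr (a, b) \<Rightarrow> (if 1 \<le> b then \<alpha> ^ a * v (Inr (a, b - 1)) else 0) + qint \<alpha> (Suc a) * v (Inr (Suc a, b)))"

definition act_U :: "nat \<Rightarrow> 'k::comm_ring_1 vec \<Rightarrow> 'k vec" where
  "act_U B v = (\<lambda>k. case k of
     Inl i \<Rightarrow> (if 1 \<le> i then v (Inl (i - 1)) else 0) + (if i = 1 then v (Inr (0, B)) else 0)
   | Inr (a, b) \<Rightarrow> if 1 \<le> a then v (Inr (a - 1, b)) else 0)"

definition Omega_action :: "nat \<Rightarrow> 'k::comm_ring_1 vec \<Rightarrow> 'k vec" where
  "Omega_action B v = (\<lambda>k. if k = Inl 0 then v (Inr (0, B)) else 0)"

lemma act_DU_commutator:
  assumes "1 \<le> B"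
  shows "act_D \<alpha> B (act_U B v) - scale_vec \<alpha> (act_U B (act_D \<alpha> B v)) - v = Omega_action B v"
proof
  fix k
  show "(act_D \<alpha> B (act_U B v) - scale_vec \<alpha> (act_U B (act_D \<alpha> B v)) - v) k = Omega_action B v k"
  proof (cases k)
    case (Inl i)
    consider "i = 0" | "i = 1" | j where "i = Suc (Suc j)"
      by (metis One_nat_def not0_implies_Suc)
    then show ?thesis
      using assms Inl by cases (simp_all add: act_D_def act_U_def Omega_action_def scale_vec_def qint_Suc algebra_simps)
  next
    case (Inr ab)
    then obtain a b where "k = Inr (a, b)" by (cases ab) auto
    then show ?thesis
      by (cases a) (simp_all add: act_D_def act_U_def Omega_action_def scale_vec_def qint_Suc algebra_simps)
  qed
qed

lemma is_linear_act_D: "is_linear (act_D \<alpha> B)"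
  unfolding is_linear_def
  by (auto simp: act_D_def scale_vec_def fun_eq_iff algebra_simps split: sum.split)

lemma is_linear_act_U: "is_linear (act_U B)"
  unfolding is_linear_def
  by (auto simp: act_U_def scale_vec_def fun_eq_iff algebra_simps split: sum.split)

primrec act_word :: "'k::comm_ring_1 \<Rightarrow> nat \<Rightarrow> bool list \<Rightarrow> 'k vec \<Rightarrow> 'k vec" where
  "act_word \<alpha> B [] v = v"
| "act_word \<alpha> B (b # w) v = (if b then act_D \<alpha> B else act_U B) (act_word \<alpha> B w v)"

lemma act_word_append: "act_word \<alpha> B (v @ w) x = act_word \<alpha> B v (act_word \<alpha> B w x)"
  by (induction v) simp_all

lemma is_linear_act_word: "is_linear (act_word \<alpha> B w)"
proof (induction w)
  case Nil
  show ?case by (simp add: is_linear_def)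
next
  case (Cons b w)
  have "is_linear (if b then act_D \<alpha> B else act_U B)"
    by (simp add: is_linear_act_D is_linear_act_U)
  with Cons.IH show ?case by (simp add: is_linear_def)
qed

definition rep :: "'k::comm_ring_1 \<Rightarrow> nat \<Rightarrow> 'k freealg \<Rightarrow> 'k vec \<Rightarrow> 'k vec" where
  "rep \<alpha> B p v = (\<lambda>k. \<Sum>x\<in>Poly_Mapping.keys p. Poly_Mapping.lookup p x * act_word \<alpha> B (letters x) v k)"

lemma rep_eq_sum_superset:
  assumes "finite A" and "Poly_Mapping.keys p \<subseteq> A"
  shows "rep \<alpha> B p v = (\<lambda>k. \<Sum>x\<in>A. Poly_Mapping.lookup p x * act_word \<alpha> B (letters x) v k)"
  unfolding rep_def
  by (rule ext, rule sum.mono_neutral_left) (use assms in \<open>auto simp: in_keys_iff\<close>)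

lemma rep_0 [simp]: "rep \<alpha> B 0 v = 0"
  by (simp add: rep_def zero_fun_def)

lemma rep_add: "rep \<alpha> B (p + q) v = rep \<alpha> B p v + rep \<alpha> B q v"
proof -
  let ?A = "Poly_Mapping.keys p \<union> Poly_Mapping.keys q"
  have "finite ?A" by simp
  then show ?thesis
    by (simp add: rep_eq_sum_superset[of ?A] keys_add lookup_add distrib_right sum.distrib fun_eq_iff)
qed

lemma rep_single: "rep \<alpha> B (Poly_Mapping.single x c) v = scale_vec c (act_word \<alpha> B (letters x) v)"
  by (simp add: rep_eq_sum_superset[of "{x}"] scale_vec_def)

lemma is_linear_rep: "is_linear (rep \<alpha> B p)"
  using is_linear_act_word[of \<alpha> B]
  by (simp add: is_linear_def rep_def scale_vec_def fun_eq_iff distrib_left sum.distrib sum_distrib_left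
      mult.left_commute)

lemma rep_mult: "rep \<alpha> B (p * q) v = rep \<alpha> B p (rep \<alpha> B q v)"
proof (induction p arbitrary: v rule: poly_mapping_induct)
  case (single k c)
  show ?case
  proof (induction q rule: poly_mapping_induct)
    case zero
    show ?case by (simp only: mult_zero_right rep_0 is_linear_zero[OF is_linear_rep])
  next
    case (single k' c')
    show ?case
      using is_linear_act_word[of \<alpha> B "letters k"]
      by (simp add: mult_single rep_single act_word_append is_linear_def scale_vec_def mult.assoc)
  next
    case (add q1 q2)
    let ?s = "Poly_Mapping.single k c"
    have "rep \<alpha> B (?s * (q1 + q2)) v = rep \<alpha> B ?s (rep \<alpha> B q1 v) + rep \<alpha> B ?s (rep \<alpha> B q2 v)"
      by (simp only: distrib_left rep_add add)
    also have "\<dots> = rep \<alpha> B ?s (rep \<alpha> B (q1 + q2) v)"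
      using is_linear_rep[of \<alpha> B ?s] by (simp only: is_linear_def rep_add)
    finally show ?case .
  qed
qed (simp_all add: distrib_right rep_add)

lemma rep_1 [simp]: "rep \<alpha> B 1 v = v"
  by (simp add: rep_single scale_vec_def flip: single_one)

lemma rep_scalar_mult: "rep \<alpha> B (scalar c * p) v = scale_vec c (rep \<alpha> B p v)"
  by (simp add: rep_mult scalar_def rep_single scale_vec_def)

lemma rep_diff: "rep \<alpha> B (p - q) v = rep \<alpha> B p v - rep \<alpha> B q v"
proof -
  have "p - q = p + scalar (- 1) * q"
    by (simp add: scalar_def single_uminus)
  then show ?thesis
    by (simp only: rep_add rep_scalar_mult) (simp add: scale_vec_def fun_eq_iff)
qed

lemma rep_sum: "rep \<alpha> B (\<Sum>x\<in>A. f x) v k = (\<Sum>x\<in>A. rep \<alpha> B (f x) v k)"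
  by (induction A rule: infinite_finite_induct) (simp_all add: rep_add)

lemma rep_gen_D: "rep \<alpha> B gen_D v = act_D \<alpha> B v"
  by (simp add: gen_D_def rep_single scale_vec_def)

lemma rep_gen_U: "rep \<alpha> B gen_U v = act_U B v"
  by (simp add: gen_U_def rep_single scale_vec_def)

lemma rep_Omega: "1 \<le> B \<Longrightarrow> rep \<alpha> B (Omega \<alpha>) v = Omega_action B v"
  unfolding Omega_def rep_diff rep_scalar_mult
  by (simp add: rep_mult rep_gen_D rep_gen_U act_DU_commutator)

definition inl_vecs :: "'k::zero vec set" where
  "inl_vecs = {v. \<forall>ab. v (Inr ab) = 0}"

lemma act_word_inl_vecs: "v \<in> inl_vecs \<Longrightarrow> act_word \<alpha> B w v \<in> inl_vecs"
  by (induction w) (auto simp: inl_vecs_def act_D_def act_U_def)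

lemma rep_inl_vecs: "v \<in> inl_vecs \<Longrightarrow> rep \<alpha> B p v \<in> inl_vecs"
  using act_word_inl_vecs[of v \<alpha> B] by (simp add: inl_vecs_def rep_def)

lemma Omega_action_inl_vecs: "v \<in> inl_vecs \<Longrightarrow> Omega_action B v = 0"
  by (auto simp: inl_vecs_def Omega_action_def fun_eq_iff)

lemma rep_downup_rels:
  assumes "1 \<le> B" and "s \<in> downup_rels \<alpha> 0 1"
  shows "rep \<alpha> B (of_fa s) v = 0"
proof -
  have "act_D \<alpha> B (Omega_action B v) = 0" and "Omega_action B (act_U B v) = 0"
    by (auto simp: act_D_def act_U_def Omega_action_def fun_eq_iff split: sum.split)
  then show ?thesis
    using assms by (auto simp: downup_rels_eq rep_mult rep_gen_D rep_gen_U rep_Omega)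
qed

lemma rep_I_omega:
  assumes "1 \<le> B" and "p \<in> I_omega \<alpha>"
  shows "rep \<alpha> B p v \<in> inl_vecs" and "v \<in> inl_vecs \<Longrightarrow> rep \<alpha> B p v = 0"
proof -
  let ?P = "\<lambda>q. (\<forall>v. rep \<alpha> B q v \<in> inl_vecs) \<and> (\<forall>v\<in>inl_vecs. rep \<alpha> B q v = 0)"
  have "to_fa p \<in> two_sided_ideal (downup_rels \<alpha> 0 1 \<union> {dua_omega \<alpha>})"
    using assms(2) by (simp add: I_omega_def omega_ideal_def)
  then have "?P (of_fa (to_fa p))"
  proof (induction rule: two_sided_ideal_induct)
    case (gen s)
    then show ?case
      using assms(1) by (auto simp: rep_downup_rels rep_Omega Omega_action_def
          Omega_action_inl_vecs inl_vecs_def simp flip: to_fa_Omega)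
  next
    case (mult a x y)
    \<comment> \<open>In the induction hypothesis the zero vector appears eta-expanded, as \<open>\<lambda>_. 0\<close>.\<close>
    then show ?case
      by (simp add: rep_mult rep_inl_vecs is_linear_zero[OF is_linear_rep] flip: zero_fun_def)
  qed (simp_all add: rep_add inl_vecs_def)
  then show "rep \<alpha> B p v \<in> inl_vecs" and "v \<in> inl_vecs \<Longrightarrow> rep \<alpha> B p v = 0"
    by simp_all
qed

lemma rep_J_omega:
  assumes "1 \<le> B" and "p \<in> J_omega \<alpha>"
  shows "rep \<alpha> B p v = 0"
proof -
  have "to_fa p \<in> two_sided_ideal (downup_rels \<alpha> 0 1 \<union>
      {fa_mult a b | a b. a \<in> omega_ideal \<alpha> \<and> b \<in> omega_ideal \<alpha>})"
    using assms(2) by (simp add: J_omega_def omega_sq_def)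
  then have "\<forall>v. rep \<alpha> B (of_fa (to_fa p)) v = 0"
  proof (induction rule: two_sided_ideal_induct)
    case (gen s)
    show ?case
    proof (cases "s \<in> downup_rels \<alpha> 0 1")
      case True
      then show ?thesis using assms(1) by (simp add: rep_downup_rels)
    next
      case False
      then obtain a b where s: "s = fa_mult a b" and ab: "a \<in> omega_ideal \<alpha>" "b \<in> omega_ideal \<alpha>"
        using gen by blast
      then have "of_fa s = of_fa a * of_fa b" and "of_fa a \<in> I_omega \<alpha>" and "of_fa b \<in> I_omega \<alpha>"
        unfolding I_omega_def omega_ideal_def
        by (simp_all add: of_fa_mult to_fa_of_fa two_sided_ideal_in_carrier)
      then show ?thesis
        using assms(1) by (simp add: rep_mult rep_I_omega)
    qed
  next
    case (mult a x y)
    then show ?case by (simp add: rep_mult is_linear_zero[OF is_linear_rep] flip: zero_fun_def)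
  qed (simp_all add: rep_add)
  then show ?thesis by simp
qed

definition unit_vec :: "nat + nat \<times> nat \<Rightarrow> 'k::zero_neq_one vec" where
  "unit_vec k0 = (\<lambda>k. if k = k0 then 1 else 0)"

lemma rep_D_power_unit_vec:
  "rep \<alpha> B (gen_D ^ l) (unit_vec (Inr (0, m))) = unit_vec (Inr (0, m + l))"
proof (induction l)
  case (Suc l)
  have "act_D \<alpha> B (unit_vec (Inr (0, m + l))) = unit_vec (Inr (0, Suc (m + l)))"
    by (auto simp: act_D_def unit_vec_def fun_eq_iff split: sum.split)
  with Suc show ?case by (simp add: rep_mult rep_gen_D)
qed simp

lemma rep_U_power_unit_vec: "rep \<alpha> B (gen_U ^ i) (unit_vec (Inl 0)) = unit_vec (Inl i)"
proof (induction i)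
  case (Suc i)
  have "act_U B (unit_vec (Inl i)) = unit_vec (Inl (Suc i))"
    by (auto simp: act_U_def unit_vec_def fun_eq_iff split: sum.split)
  with Suc show ?case by (simp add: rep_mult rep_gen_U)
qed simp

lemma Omega_action_unit_vec:
  "Omega_action B (unit_vec (Inr (0, n))) = (if n = B then unit_vec (Inl 0) else 0)"
  by (auto simp: Omega_action_def unit_vec_def fun_eq_iff)

lemma rep_Omega_basis_unit_vec:
  assumes "1 \<le> B"
  shows "rep \<alpha> B (Omega_basis \<alpha> i l) (unit_vec (Inr (0, m))) =
    (if m + l = B then unit_vec (Inl i) else 0)"
  using assms
  by (simp add: Omega_basis_def rep_mult rep_D_power_unit_vec rep_Omega Omega_action_unit_vec
      rep_U_power_unit_vec is_linear_zero[OF is_linear_rep])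

lemma omega_basis_independent_mod_sq:
  fixes \<alpha> :: "'k::comm_ring_1"
  assumes "finite S" and "x \<in> S"
    and "fa_sum S (\<lambda>x. fa_smult (c x) (omega_basis \<alpha> (fst x) (snd x))) \<in> omega_sq \<alpha>"
  shows "c x = 0"
proof -
  obtain i0 l0 where x: "x = (i0, l0)" by (cases x)
  define B where "B = Suc (Max (snd ` S))"
  have "1 \<le> B" by (simp add: B_def)
  have snd_less_B: "snd y < B" if "y \<in> S" for y
    using assms(1) that by (simp add: B_def le_imp_less_Suc)
  define m where "m = B - l0"
  have level: "m + snd y = B \<longleftrightarrow> snd y = l0" if "y \<in> S" for y
    using snd_less_B[OF that] snd_less_B[OF assms(2)] by (auto simp: m_def x)
  have "Omega_comb \<alpha> S c \<in> J_omega \<alpha>"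
    using assms(3) by (simp add: J_omega_def to_fa_Omega_comb)
  then have "0 = rep \<alpha> B (Omega_comb \<alpha> S c) (unit_vec (Inr (0, m))) (Inl i0)"
    using \<open>1 \<le> B\<close> by (simp add: rep_J_omega)
  also have "\<dots> = (\<Sum>y\<in>S. c y * (if m + snd y = B then unit_vec (Inl (fst y)) else 0) (Inl i0))"
    using \<open>1 \<le> B\<close>
    by (simp add: Omega_comb_def rep_sum rep_scalar_mult scale_vec_def rep_Omega_basis_unit_vec)
  also have "\<dots> = (\<Sum>y\<in>S. if y = x then c y else 0)"
    by (rule sum.cong) (auto simp: level unit_vec_def x)
  also have "\<dots> = c x"
    using assms(1,2) by simp
  finally show ?thesis by simp
qed

lemma omega_basis_commutation_mod_sq:
  fixes \<alpha> :: "'k::field"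
  assumes "\<alpha> \<noteq> 1"
  shows "fa_sub (fa_mult (omega_basis \<alpha> i l) gen_u)
      (fa_smult ((\<alpha> ^ l - 1) / (\<alpha> - 1)) (omega_basis \<alpha> i (l - 1))) \<in> omega_sq \<alpha>"
    and "fa_sub (fa_mult gen_d (omega_basis \<alpha> i l))
      (fa_smult ((\<alpha> ^ i - 1) / (\<alpha> - 1)) (omega_basis \<alpha> (i - 1) l)) \<in> omega_sq \<alpha>"
  using Omega_basis_mult_U[of \<alpha> i l] D_mult_Omega_basis[of \<alpha> i l]
  unfolding J_omega_def vimage_eq to_fa_diff to_fa_scalar_mult qint_eq_quotient[OF assms]
  unfolding to_fa_mult to_fa_Omega_basis to_fa_gen_U to_fa_gen_D
  by simp_all

theorem corollary2p6:
  fixes \<alpha> :: "'k::field_char_0"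
  shows "(\<forall>p \<in> omega_ideal \<alpha>. \<exists>(S::(nat \<times> nat) set) c. finite S \<and>
            fa_sub p (fa_sum S (\<lambda>x. fa_smult (c x) (omega_basis \<alpha> (fst x) (snd x))))
              \<in> omega_sq \<alpha>)
       \<and> (\<forall>(S::(nat \<times> nat) set) c. finite S \<and>
            fa_sum S (\<lambda>x. fa_smult (c x) (omega_basis \<alpha> (fst x) (snd x))) \<in> omega_sq \<alpha>
              \<longrightarrow> (\<forall>x\<in>S. c x = 0))
       \<and> (\<alpha> \<noteq> 1 \<longrightarrow> (\<forall>i l.
            fa_sub (fa_mult (omega_basis \<alpha> i l) gen_u)
                   (fa_smult ((\<alpha> ^ l - 1) / (\<alpha> - 1)) (omega_basis \<alpha> i (l - 1))) \<in> omega_sq \<alpha>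
          \<and> fa_sub (fa_mult gen_d (omega_basis \<alpha> i l))
                   (fa_smult ((\<alpha> ^ i - 1) / (\<alpha> - 1)) (omega_basis \<alpha> (i - 1) l)) \<in> omega_sq \<alpha>))"
  by (intro conjI ballI allI impI omega_ideal_spanned_mod_sq omega_basis_commutation_mod_sq)
    (auto intro: omega_basis_independent_mod_sq)

end
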